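(* Let $X$ be a finite set. (i) If $F$ is a set of permutations of $X$, then $\langle F\rangle_G=\mathrm{Aut}(\mathrm{Inv}(F))$. (ii) If $F$ is a set of multipermutations on $X$, then $\langle F\rangle_{DSM}=\mathrm{shE}(\mathrm{Inv}(F))$.
   Context: A multipermutation on $X$ is a map $f:X\to\mathcal{P}(X)\setminus\{\emptyset\}$ such that every $y\in X$ lies in $f(x)$ for some $x$; permutations are identified with multipermutations with singleton images. A multipermutation $f$ preserves a relation $R\subseteq X^i$ if $(x_1,\dots,x_i)\in R$ and $y_j\in f(x_j)$ for all $j$ imply $(y_1,\dots,y_i)\in R$. $\mathrm{Inv}(F)$ is the set of all relations on $X$ (of all finite arities) preserved by every member of $F$, regarded as a relational structure on $X$. For a structure $\mathcal{C}$ on $X$, $\mathrm{Aut}(\mathcal{C})$ is its set of automorphisms and $\mathrm{shE}(\mathcal{C})$ is the set of multipermutations on $X$ preserving all relations of $\mathcal{C}$. The identity multipermutation is $x\mapsto\{x\}$; the composition $g\circ f$ is $x\mapsto\{z:\exists y\,(y\in f(x)\wedge z\in g(y))\}$; $f$ is a sub-multipermutation of $g$ if $f(x)\subseteq g(x)$ for all $x$. A down-shop-monoid (DSM) on $X$ is a set of multipermutations on $X$ containing the identity and closed under composition and under taking sub-multipermutations (that are themselves multipermutations). $\langle F\rangle_{DSM}$ is the smallest DSM containing $F$, and $\langle F\rangle_G$ is the permutation group generated by $F$. *)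

theory Defs
  imports "HOL-Combinatorics.Permutations"
begin

text \<open>A relation of arity n on X is a pair (n, R) with R a set of lists
  of length n over X; a relational structure is a set of such pairs.\<close>

definition multiperm :: "'a set \<Rightarrow> ('a \<Rightarrow> 'a set) \<Rightarrow> bool" where
  "multiperm X f \<longleftrightarrow>
     (\<forall>x\<in>X. f x \<noteq> {} \<and> f x \<subseteq> X) \<and> (\<forall>x. x \<notin> X \<longrightarrow> f x = {}) \<and>
     (\<forall>y\<in>X. \<exists>x\<in>X. y \<in> f x)"

definition tuples :: "'a set \<Rightarrow> nat \<Rightarrow> 'a list set" where
  "tuples X n = {xs. length xs = n \<and> set xs \<subseteq> X}"

definition is_rel :: "'a set \<Rightarrow> nat \<times> 'a list set \<Rightarrow> bool" where
  "is_rel X nR \<longleftrightarrow> snd nR \<subseteq> tuples X (fst nR)"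

definition mp_preserves :: "('a \<Rightarrow> 'a set) \<Rightarrow> 'a list set \<Rightarrow> bool" where
  "mp_preserves f R \<longleftrightarrow>
     (\<forall>xs ys. xs \<in> R \<and> list_all2 (\<lambda>x y. y \<in> f x) xs ys \<longrightarrow> ys \<in> R)"

definition perm_to_mp :: "'a set \<Rightarrow> ('a \<Rightarrow> 'a) \<Rightarrow> 'a \<Rightarrow> 'a set" where
  "perm_to_mp X \<sigma> = (\<lambda>x. if x \<in> X then {\<sigma> x} else {})"

definition Inv :: "'a set \<Rightarrow> ('a \<Rightarrow> 'a set) set \<Rightarrow> (nat \<times> 'a list set) set" where
  "Inv X F = {nR. is_rel X nR \<and> (\<forall>f\<in>F. mp_preserves f (snd nR))}"

definition Aut :: "'a set \<Rightarrow> (nat \<times> 'a list set) set \<Rightarrow> ('a \<Rightarrow> 'a) set" where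
  "Aut X C = {\<sigma>. \<sigma> permutes X \<and>
     (\<forall>nR\<in>C. \<forall>xs\<in>tuples X (fst nR). xs \<in> snd nR \<longleftrightarrow> map \<sigma> xs \<in> snd nR)}"

definition shE :: "'a set \<Rightarrow> (nat \<times> 'a list set) set \<Rightarrow> ('a \<Rightarrow> 'a set) set" where
  "shE X C = {f. multiperm X f \<and> (\<forall>nR\<in>C. mp_preserves f (snd nR))}"

definition mp_id :: "'a set \<Rightarrow> 'a \<Rightarrow> 'a set" where
  "mp_id X = (\<lambda>x. if x \<in> X then {x} else {})"

definition mp_comp :: "('a \<Rightarrow> 'a set) \<Rightarrow> ('a \<Rightarrow> 'a set) \<Rightarrow> 'a \<Rightarrow> 'a set" where
  "mp_comp g f = (\<lambda>x. {z. \<exists>y. y \<in> f x \<and> z \<in> g y})"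

definition DSM :: "'a set \<Rightarrow> ('a \<Rightarrow> 'a set) set \<Rightarrow> bool" where
  "DSM X M \<longleftrightarrow> (\<forall>f\<in>M. multiperm X f) \<and> mp_id X \<in> M \<and>
     (\<forall>f\<in>M. \<forall>g\<in>M. mp_comp g f \<in> M) \<and>
     (\<forall>g\<in>M. \<forall>f. multiperm X f \<and> (\<forall>x. f x \<subseteq> g x) \<longrightarrow> f \<in> M)"

definition DSM_gen :: "'a set \<Rightarrow> ('a \<Rightarrow> 'a set) set \<Rightarrow> ('a \<Rightarrow> 'a set) set" where
  "DSM_gen X F = \<Inter> {M. DSM X M \<and> F \<subseteq> M}"

inductive_set group_gen :: "'a set \<Rightarrow> ('a \<Rightarrow> 'a) set \<Rightarrow> ('a \<Rightarrow> 'a) set"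
  for X :: "'a set" and F :: "('a \<Rightarrow> 'a) set" where
  gen_id: "id \<in> group_gen X F"
| gen_base: "\<sigma> \<in> F \<Longrightarrow> \<sigma> \<in> group_gen X F"
| gen_comp: "\<sigma> \<in> group_gen X F \<Longrightarrow> \<tau> \<in> group_gen X F \<Longrightarrow> \<sigma> \<circ> \<tau> \<in> group_gen X F"
| gen_inv: "\<sigma> \<in> group_gen X F \<Longrightarrow> inv \<sigma> \<in> group_gen X F"

end

theory Submission
  imports Defs
begin

text \<open>
  The inclusions of the generated objects in Aut(Inv F) and shE(Inv F) are closure arguments:
  the multipermutations preserving a fixed relation contain the identity and are closed under
  composition and under passing to sub-multipermutations; for permutations, finiteness of the
  relation turns the preservation property map \<sigma> ` R \<subseteq> R into an equality, which gives closure
  under inverses.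

  For the converse inclusions, fix a tuple a over X and consider its orbit, the set of all
  tuples obtained from a by applying a member of the generated object coordinatewise.  The
  orbit is invariant under F.  Taking for a an enumeration of X, an automorphism \<tau> of Inv F
  maps a into the orbit, so \<tau> agrees with a generated permutation on X.  Taking for a the first
  coordinates of an enumeration of the graph of f \<in> shE(Inv F), f maps a to the second
  coordinates, which therefore lie in the orbit: f is a sub-multipermutation of a generated
  multipermutation.
\<close>

lemma list_all2_mp_comp_iff:
  "list_all2 (\<lambda>x y. y \<in> mp_comp g f x) xs zs \<longleftrightarrow>
     (\<exists>ys. list_all2 (\<lambda>x y. y \<in> f x) xs ys \<and> list_all2 (\<lambda>x y. y \<in> g x) ys zs)"
proof -
  have "(\<lambda>x y. y \<in> mp_comp g f x) = (\<lambda>x y. y \<in> f x) OO (\<lambda>x y. y \<in> g x)"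
    by (auto simp: mp_comp_def fun_eq_iff)
  then show ?thesis
    by (simp add: list.rel_compp relcompp_apply)
qed

lemma list_all2_fst_snd_iff:
  "list_all2 (\<lambda>x y. y \<in> g x) (map fst ps) (map snd ps) \<longleftrightarrow> (\<forall>(x, y)\<in>set ps. y \<in> g x)"
  by (auto simp: list_all2_map1 list_all2_map2 list_all2_same)

lemma list_all2_perm_to_mp_iff:
  assumes "set xs \<subseteq> X"
  shows "list_all2 (\<lambda>x y. y \<in> perm_to_mp X \<sigma> x) xs ys \<longleftrightarrow> ys = map \<sigma> xs"
  using assms by (induction xs arbitrary: ys) (auto simp: perm_to_mp_def list_all2_Cons1)

lemma list_all2_multiperm_set_subset:
  assumes "multiperm X g" "list_all2 (\<lambda>x y. y \<in> g x) xs ys" "set xs \<subseteq> X"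
  shows "set ys \<subseteq> X"
  using assms(2,3) by induction (use assms(1) in \<open>auto simp: multiperm_def\<close>)

lemma multiperm_mp_id: "multiperm X (mp_id X)"
  by (auto simp: multiperm_def mp_id_def)

lemma multiperm_mp_comp:
  assumes f: "multiperm X f" and g: "multiperm X g"
  shows "multiperm X (mp_comp g f)"
  unfolding multiperm_def
proof (intro conjI ballI allI impI)
  fix x assume "x \<in> X"
  then obtain y where "y \<in> f x" "y \<in> X"
    using f unfolding multiperm_def by blast
  moreover obtain z where "z \<in> g y"
    using g \<open>y \<in> X\<close> unfolding multiperm_def by blast
  ultimately show "mp_comp g f x \<noteq> {}"
    by (auto simp: mp_comp_def)
  show "mp_comp g f x \<subseteq> X"
    using f g \<open>x \<in> X\<close> by (auto simp: multiperm_def mp_comp_def)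
next
  fix x assume "x \<notin> X"
  then show "mp_comp g f x = {}"
    using f by (auto simp: multiperm_def mp_comp_def)
next
  fix z assume "z \<in> X"
  then obtain y where "y \<in> X" "z \<in> g y"
    using g by (auto simp: multiperm_def)
  moreover then obtain x where "x \<in> X" "y \<in> f x"
    using f by (auto simp: multiperm_def)
  ultimately show "\<exists>x\<in>X. z \<in> mp_comp g f x"
    by (auto simp: mp_comp_def)
qed

lemma mp_preserves_mp_id: "mp_preserves (mp_id X) R"
proof -
  have "list_all2 (\<lambda>x y. y \<in> mp_id X x) xs ys \<Longrightarrow> ys = xs" for xs ys :: "'a list"
    by (induction rule: list_all2_induct) (auto simp: mp_id_def split: if_splits)
  then show ?thesis
    by (auto simp: mp_preserves_def)
qed

lemma mp_preserves_mp_comp: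
  "mp_preserves f R \<Longrightarrow> mp_preserves g R \<Longrightarrow> mp_preserves (mp_comp g f) R"
  unfolding mp_preserves_def list_all2_mp_comp_iff by blast

lemma mp_preserves_antimono:
  assumes "mp_preserves g R" "\<And>x. f x \<subseteq> g x"
  shows "mp_preserves f R"
proof -
  have "list_all2 (\<lambda>x y. y \<in> f x) xs ys \<Longrightarrow> list_all2 (\<lambda>x y. y \<in> g x) xs ys" for xs ys
    by (erule list_all2_mono) (use assms(2) in blast)
  then show ?thesis
    using assms(1) by (auto simp: mp_preserves_def)
qed

lemma DSM_shE: "DSM X (shE X C)"
  unfolding DSM_def shE_def
  by (auto simp: multiperm_mp_id multiperm_mp_comp mp_preserves_mp_id
      intro: mp_preserves_mp_comp mp_preserves_antimono)

definition mp_orbit :: "('a \<Rightarrow> 'a set) set \<Rightarrow> 'a list \<Rightarrow> 'a list set" where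
  "mp_orbit M as = {ys. \<exists>g\<in>M. list_all2 (\<lambda>x y. y \<in> g x) as ys}"

lemma self_in_mp_orbit:
  assumes "mp_id X \<in> M" "set as \<subseteq> X"
  shows "as \<in> mp_orbit M as"
proof -
  have "list_all2 (\<lambda>x y. y \<in> mp_id X x) as as"
    using assms(2) by (auto simp: list_all2_same mp_id_def)
  then show ?thesis
    using assms(1) by (auto simp: mp_orbit_def)
qed

lemma mp_orbit_in_Inv:
  assumes M: "\<forall>g\<in>M. multiperm X g" and closed: "\<forall>h\<in>F. \<forall>g\<in>M. mp_comp h g \<in> M"
    and as: "set as \<subseteq> X"
  shows "(length as, mp_orbit M as) \<in> Inv X F"
proof -
  have "ys \<in> tuples X (length as)" if ys: "ys \<in> mp_orbit M as" for ys
  proof -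
    obtain g where "g \<in> M" "list_all2 (\<lambda>x y. y \<in> g x) as ys"
      using ys by (auto simp: mp_orbit_def)
    then show ?thesis
      using M as list_all2_multiperm_set_subset[of X g as ys]
      by (auto simp: tuples_def dest: list_all2_lengthD)
  qed
  moreover have "mp_preserves h (mp_orbit M as)" if "h \<in> F" for h
    using that closed unfolding mp_preserves_def mp_orbit_def
    by (blast intro: list_all2_mp_comp_iff[THEN iffD2])
  ultimately show ?thesis
    by (auto simp: Inv_def is_rel_def)
qed

lemma shE_Inv_subset_DSM:
  assumes "finite X" and M: "DSM X M" "F \<subseteq> M" and f: "f \<in> shE X (Inv X F)"
  shows "f \<in> M"
proof -
  have mp: "multiperm X f"
    using f by (simp add: shE_def)
  have "{(x, y). y \<in> f x} \<subseteq> X \<times> X"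
    using mp by (auto simp: multiperm_def)
  then have "finite {(x, y). y \<in> f x}"
    using \<open>finite X\<close> finite_subset by blast
  then obtain ps where ps: "set ps = {(x, y). y \<in> f x}"
    using finite_list by blast
  define as where "as = map fst ps"
  have as: "set as \<subseteq> X"
    using mp ps by (auto simp: as_def multiperm_def)
  have "(length as, mp_orbit M as) \<in> Inv X F"
  proof (rule mp_orbit_in_Inv[OF _ _ as])
    show "\<forall>g\<in>M. multiperm X g" "\<forall>h\<in>F. \<forall>g\<in>M. mp_comp h g \<in> M"
      using M unfolding DSM_def by blast+
  qed
  then have "mp_preserves f (mp_orbit M as)"
    using f by (fastforce simp: shE_def)
  moreover have "as \<in> mp_orbit M as"
    using M(1) as by (intro self_in_mp_orbit) (simp_all add: DSM_def)
  moreover have "list_all2 (\<lambda>x y. y \<in> f x) as (map snd ps)"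
    using ps by (auto simp: as_def list_all2_fst_snd_iff)
  ultimately have "map snd ps \<in> mp_orbit M as"
    unfolding mp_preserves_def by blast
  then obtain g where "g \<in> M" and g: "\<forall>(x, y)\<in>set ps. y \<in> g x"
    by (auto simp: mp_orbit_def as_def list_all2_fst_snd_iff)
  moreover have "f x \<subseteq> g x" for x
    using g ps by blast
  ultimately show ?thesis
    using M(1) mp unfolding DSM_def by blast
qed

theorem DSM_gen_eq_shE_Inv:
  assumes "finite X" "\<forall>f\<in>F. multiperm X f"
  shows "DSM_gen X F = shE X (Inv X F)"
proof
  have "F \<subseteq> shE X (Inv X F)"
    using assms(2) by (auto simp: shE_def Inv_def)
  then show "DSM_gen X F \<subseteq> shE X (Inv X F)"
    unfolding DSM_gen_def using DSM_shE by blast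
  show "shE X (Inv X F) \<subseteq> DSM_gen X F"
    unfolding DSM_gen_def using shE_Inv_subset_DSM[OF assms(1)] by blast
qed

lemma group_gen_subset:
  assumes "id \<in> G" "F \<subseteq> G" "\<And>\<sigma> \<tau>. \<sigma> \<in> G \<Longrightarrow> \<tau> \<in> G \<Longrightarrow> \<sigma> \<circ> \<tau> \<in> G"
    "\<And>\<sigma>. \<sigma> \<in> G \<Longrightarrow> inv \<sigma> \<in> G"
  shows "group_gen X F \<subseteq> G"
proof
  fix \<sigma> assume "\<sigma> \<in> group_gen X F"
  then show "\<sigma> \<in> G"
    by induction (use assms in blast)+
qed

lemma group_gen_permutes:
  assumes "\<forall>\<sigma>\<in>F. \<sigma> permutes X" "\<sigma> \<in> group_gen X F"
  shows "\<sigma> permutes X"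
proof -
  have "group_gen X F \<subseteq> {\<sigma>. \<sigma> permutes X}"
    using assms(1)
    by (intro group_gen_subset) (auto simp: permutes_id permutes_compose permutes_inv)
  then show ?thesis
    using assms(2) by blast
qed

lemma perm_to_mp_id: "perm_to_mp X id = mp_id X"
  by (simp add: perm_to_mp_def mp_id_def fun_eq_iff)

lemma mp_comp_perm_to_mp:
  assumes "\<sigma> ` X \<subseteq> X"
  shows "mp_comp (perm_to_mp X \<tau>) (perm_to_mp X \<sigma>) = perm_to_mp X (\<tau> \<circ> \<sigma>)"
  using assms by (auto simp: mp_comp_def perm_to_mp_def fun_eq_iff)

lemma multiperm_perm_to_mp:
  assumes "\<sigma> permutes X"
  shows "multiperm X (perm_to_mp X \<sigma>)"
  using assms by (auto simp: multiperm_def perm_to_mp_def permutes_in_image)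
    (metis permutes_inverses(1) permutes_in_image permutes_inv)

lemma mp_preserves_perm_to_mp_iff:
  assumes "R \<subseteq> tuples X n"
  shows "mp_preserves (perm_to_mp X \<sigma>) R \<longleftrightarrow> map \<sigma> ` R \<subseteq> R"
proof -
  have "list_all2 (\<lambda>x y. y \<in> perm_to_mp X \<sigma> x) xs ys \<longleftrightarrow> ys = map \<sigma> xs"
    if "xs \<in> R" for xs ys
    using that assms by (intro list_all2_perm_to_mp_iff) (auto simp: tuples_def)
  then show ?thesis
    unfolding mp_preserves_def by blast
qed

lemma map_image_comp_eq:
  assumes "map \<sigma> ` R = R" "map \<tau> ` R = R"
  shows "map (\<sigma> \<circ> \<tau>) ` R = R"
proof -
  have "map (\<sigma> \<circ> \<tau>) ` R = map \<sigma> ` map \<tau> ` R"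
    by (simp add: image_image)
  then show ?thesis
    using assms by simp
qed

lemma map_image_inv_eq:
  assumes "inj \<sigma>" "map \<sigma> ` R = R"
  shows "map (inv \<sigma>) ` R = R"
proof -
  have "map (inv \<sigma>) ` R = map (inv \<sigma>) ` map \<sigma> ` R"
    using assms(2) by simp
  also have "\<dots> = R"
    using assms(1) by (simp add: image_image)
  finally show ?thesis .
qed

lemma map_image_eq_if_mp_preserves_perm_to_mp:
  assumes "finite X" "\<sigma> permutes X" "R \<subseteq> tuples X n" "mp_preserves (perm_to_mp X \<sigma>) R"
  shows "map \<sigma> ` R = R"
proof (rule endo_inj_surj)
  have "finite (tuples X n)"
    using finite_lists_length_eq[OF assms(1), of n] by (simp add: tuples_def conj_commute)
  then show "finite R"
    using assms(3) finite_subset by blast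
  show "map \<sigma> ` R \<subseteq> R"
    using assms(3,4) mp_preserves_perm_to_mp_iff by blast
  have "inj (map \<sigma>)"
    using assms(2) by (blast intro: inj_mapI permutes_inj)
  then show "inj_on (map \<sigma>) R"
    by (rule inj_on_subset) simp
qed

lemma group_gen_subset_stabilizer:
  assumes "\<forall>\<sigma>\<in>F. \<sigma> permutes X \<and> map \<sigma> ` R = R"
  shows "group_gen X F \<subseteq> {\<sigma>. \<sigma> permutes X \<and> map \<sigma> ` R = R}"
proof (rule group_gen_subset)
  fix \<sigma> \<tau>
  assume "\<sigma> \<in> {\<sigma>. \<sigma> permutes X \<and> map \<sigma> ` R = R}" "\<tau> \<in> {\<sigma>. \<sigma> permutes X \<and> map \<sigma> ` R = R}"
  then show "\<sigma> \<circ> \<tau> \<in> {\<sigma>. \<sigma> permutes X \<and> map \<sigma> ` R = R}"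
    by (simp add: permutes_compose map_image_comp_eq)
next
  fix \<sigma> assume "\<sigma> \<in> {\<sigma>. \<sigma> permutes X \<and> map \<sigma> ` R = R}"
  then have \<sigma>: "\<sigma> permutes X" "map \<sigma> ` R = R"
    by simp_all
  have "inv \<sigma> permutes X"
    using \<sigma>(1) by (rule permutes_inv)
  moreover have "map (inv \<sigma>) ` R = R"
    using permutes_inj[OF \<sigma>(1)] \<sigma>(2) by (rule map_image_inv_eq)
  ultimately show "inv \<sigma> \<in> {\<sigma>. \<sigma> permutes X \<and> map \<sigma> ` R = R}"
    by simp
qed (use assms in \<open>auto simp: permutes_id\<close>)

lemma group_gen_subset_Aut:
  assumes "finite X" and F: "\<forall>\<sigma>\<in>F. \<sigma> permutes X"
  shows "group_gen X F \<subseteq> Aut X (Inv X (perm_to_mp X ` F))"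
proof
  fix g assume g: "g \<in> group_gen X F"
  have invariant: "map g ` R = R" if "(n, R) \<in> Inv X (perm_to_mp X ` F)" for n R
  proof -
    have "R \<subseteq> tuples X n" "\<forall>\<sigma>\<in>F. mp_preserves (perm_to_mp X \<sigma>) R"
      using that by (auto simp: Inv_def is_rel_def)
    then have "\<forall>\<sigma>\<in>F. \<sigma> permutes X \<and> map \<sigma> ` R = R"
      using F \<open>finite X\<close> map_image_eq_if_mp_preserves_perm_to_mp by blast
    then show ?thesis
      using g group_gen_subset_stabilizer by blast
  qed
  have "g permutes X"
    using F g by (rule group_gen_permutes)
  then have "inj (map g)"
    by (simp add: inj_mapI permutes_inj)
  have "xs \<in> snd nR \<longleftrightarrow> map g xs \<in> snd nR"
    if "nR \<in> Inv X (perm_to_mp X ` F)" for nR xs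
    using inj_image_mem_iff[OF \<open>inj (map g)\<close>, of xs "snd nR"] invariant[of "fst nR" "snd nR"] that
    by simp
  then show "g \<in> Aut X (Inv X (perm_to_mp X ` F))"
    using \<open>g permutes X\<close> unfolding Aut_def by blast
qed

lemma mp_orbit_group_gen_in_Inv:
  assumes F: "\<forall>\<sigma>\<in>F. \<sigma> permutes X" and "set xs \<subseteq> X"
  shows "(length xs, mp_orbit (perm_to_mp X ` group_gen X F) xs) \<in> Inv X (perm_to_mp X ` F)"
proof (rule mp_orbit_in_Inv[OF _ _ \<open>set xs \<subseteq> X\<close>])
  show "\<forall>g\<in>perm_to_mp X ` group_gen X F. multiperm X g"
    using F group_gen_permutes multiperm_perm_to_mp by blast
  show "\<forall>h\<in>perm_to_mp X ` F. \<forall>g\<in>perm_to_mp X ` group_gen X F.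
          mp_comp h g \<in> perm_to_mp X ` group_gen X F"
  proof (intro ballI)
    fix h g assume "h \<in> perm_to_mp X ` F" "g \<in> perm_to_mp X ` group_gen X F"
    then obtain \<sigma> \<rho> where \<sigma>: "\<sigma> \<in> F" "h = perm_to_mp X \<sigma>"
      and \<rho>: "\<rho> \<in> group_gen X F" "g = perm_to_mp X \<rho>"
      by blast
    have "\<rho> ` X \<subseteq> X"
      using group_gen_permutes[OF F \<rho>(1)] by (simp add: permutes_image)
    then have "mp_comp h g = perm_to_mp X (\<sigma> \<circ> \<rho>)"
      using \<sigma>(2) \<rho>(2) by (simp add: mp_comp_perm_to_mp)
    moreover have "\<sigma> \<circ> \<rho> \<in> group_gen X F"
      by (rule group_gen.gen_comp[OF group_gen.gen_base[OF \<sigma>(1)] \<rho>(1)])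
    ultimately show "mp_comp h g \<in> perm_to_mp X ` group_gen X F"
      by simp
  qed
qed

lemma Aut_subset_group_gen:
  assumes "finite X" and F: "\<forall>\<sigma>\<in>F. \<sigma> permutes X"
  shows "Aut X (Inv X (perm_to_mp X ` F)) \<subseteq> group_gen X F"
proof
  fix \<tau> assume \<tau>: "\<tau> \<in> Aut X (Inv X (perm_to_mp X ` F))"
  obtain xs where xs: "set xs = X"
    using \<open>finite X\<close> finite_list by blast
  define M where "M = perm_to_mp X ` group_gen X F"
  have "(length xs, mp_orbit M xs) \<in> Inv X (perm_to_mp X ` F)"
    unfolding M_def using F xs by (intro mp_orbit_group_gen_in_Inv) simp_all
  moreover have "xs \<in> tuples X (length xs)"
    using xs by (simp add: tuples_def)
  moreover have "xs \<in> mp_orbit M xs"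
  proof (rule self_in_mp_orbit)
    show "mp_id X \<in> M"
      unfolding M_def perm_to_mp_id[symmetric] by (intro imageI group_gen.gen_id)
  qed (simp add: xs)
  ultimately have "map \<tau> xs \<in> mp_orbit M xs"
    using \<tau> unfolding Aut_def by fastforce
  then obtain g where g: "g \<in> group_gen X F" "map \<tau> xs = map g xs"
    using xs by (auto simp: mp_orbit_def M_def list_all2_perm_to_mp_iff)
  have "\<tau> permutes X" "g permutes X"
    using \<tau> group_gen_permutes[OF F g(1)] by (simp_all add: Aut_def)
  then have "\<tau> = g"
    using g(2) xs by (metis map_eq_conv permutes_not_in ext)
  then show "\<tau> \<in> group_gen X F"
    using g(1) by simp
qed

theorem group_gen_eq_Aut_Inv:
  assumes "finite X" "\<forall>\<sigma>\<in>F. \<sigma> permutes X"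
  shows "group_gen X F = Aut X (Inv X (perm_to_mp X ` F))"
  using group_gen_subset_Aut[OF assms] Aut_subset_group_gen[OF assms] by (rule subset_antisym)

theorem theorem2p5:
  fixes X :: "'a set"
  assumes "finite X"
  shows "(\<forall>F. (\<forall>\<sigma>\<in>F. \<sigma> permutes X) \<longrightarrow>
            group_gen X F = Aut X (Inv X (perm_to_mp X ` F)))
       \<and> (\<forall>F. (\<forall>f\<in>F. multiperm X f) \<longrightarrow> DSM_gen X F = shE X (Inv X F))"
  using group_gen_eq_Aut_Inv[OF assms] DSM_gen_eq_shE_Inv[OF assms] by blast

end
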